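(* Let $R$ be a commutative ring with identity, let $(S,\leq)$ be a strictly ordered monoid, and suppose $S=S_1\sqcup S_2$ is a disjoint union of subsets. Define the $R$-linear map $P:R\,S\to R\,S$ on the monoid algebra by $P(x)=x$ for $x\in S_1$ and $P(x)=0$ for $x\in S_2$, and define $\widehat{P}:[[R^{S,\leq}]]\to[[R^{S,\leq}]]$ by $\widehat{P}(f)(s)=f(s)$ for $s\in S_1$ and $\widehat{P}(f)(s)=0$ for $s\in S_2$. Then $P$ is a Rota-Baxter operator (of weight $-1$) on $R\,S$ if and only if $\widehat{P}$ is a Rota-Baxter operator (of weight $-1$) on $[[R^{S,\leq}]]$.
   Context: All monoids are commutative and written additively with neutral element $0$. A partially ordered set is artinian if every strictly decreasing sequence is finite, and narrow if every subset of pairwise incomparable elements is finite. A strictly ordered monoid is a commutative monoid $S$ with a partial order $\leq$ such that $s<s'$ implies $s+t<s'+t$ for all $s,s',t\in S$. The ring of generalized power series $[[R^{S,\leq}]]$ is the set of maps $f:S\to R$ with artinian and narrow support $\{s: f(s)\neq 0\}$, with pointwise addition and convolution $(fg)(s)=\sum f(u)g(v)$ over the finitely many pairs $(u,v)$ with $u+v=s$, $f(u)\neq0$, $g(v)\neq0$. A Rota-Baxter operator of weight $-1$ on an associative $R$-algebra $A$ is an $R$-linear $P:A\to A$ with $P(x)P(y)=P(xP(y))+P(P(x)y)-P(xy)$ for all $x,y\in A$. *)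

theory Defs
  imports Main
begin

definition supp :: "('a \<Rightarrow> 'r::zero) \<Rightarrow> 'a set" where
  "supp f = {s. f s \<noteq> 0}"

definition artinian :: "'a::order set \<Rightarrow> bool" where
  "artinian A \<longleftrightarrow> \<not> (\<exists>g :: nat \<Rightarrow> 'a. (\<forall>n. g n \<in> A \<and> g (Suc n) < g n))"

definition narrow :: "'a::order set \<Rightarrow> bool" where
  "narrow A \<longleftrightarrow> (\<forall>B \<subseteq> A. (\<forall>x\<in>B. \<forall>y\<in>B. x \<noteq> y \<longrightarrow> \<not> x \<le> y \<and> \<not> y \<le> x) \<longrightarrow> finite B)"

definition strictly_ordered_monoid :: "'a::{comm_monoid_add, order} itself \<Rightarrow> bool" where
  "strictly_ordered_monoid _ \<longleftrightarrow> (\<forall>s s' t :: 'a. s < s' \<longrightarrow> s + t < s' + t)"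

definition monoid_algebra :: "('a \<Rightarrow> 'r::zero) set" where
  "monoid_algebra = {f. finite (supp f)}"

definition gen_power_series :: "('a::order \<Rightarrow> 'r::zero) set" where
  "gen_power_series = {f. artinian (supp f) \<and> narrow (supp f)}"

definition conv :: "('a::comm_monoid_add \<Rightarrow> 'r::comm_ring_1) \<Rightarrow> ('a \<Rightarrow> 'r) \<Rightarrow> 'a \<Rightarrow> 'r" where
  "conv f g s = (\<Sum>(u, v) \<in> {(u, v). u + v = s \<and> f u \<noteq> 0 \<and> g v \<noteq> 0}. f u * g v)"

definition rota_baxter :: "('a::comm_monoid_add \<Rightarrow> 'r::comm_ring_1) set \<Rightarrow> (('a \<Rightarrow> 'r) \<Rightarrow> ('a \<Rightarrow> 'r)) \<Rightarrow> bool" where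
  "rota_baxter A P \<longleftrightarrow>
     (\<forall>x\<in>A. P x \<in> A) \<and>
     (\<forall>x\<in>A. \<forall>y\<in>A. P (\<lambda>s. x s + y s) = (\<lambda>s. P x s + P y s)) \<and>
     (\<forall>c. \<forall>x\<in>A. P (\<lambda>s. c * x s) = (\<lambda>s. c * P x s)) \<and>
     (\<forall>x\<in>A. \<forall>y\<in>A. conv (P x) (P y) = (\<lambda>s. P (conv x (P y)) s + P (conv (P x) y) s - P (conv x y) s))"

end

theory Submission
  imports Defs "HOL-Library.Ramsey"
begin

text \<open>Assume \<open>1 \<noteq> 0\<close>. Evaluating the Rota-Baxter identity for the projection onto \<open>S\<^sub>1\<close>
  on two monomials \<open>u\<close>, \<open>v\<close> at \<open>u + v\<close> shows that it can hold only if both \<open>S\<^sub>1\<close> and its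
  complement are closed under addition. Conversely, under this closure condition the identity
  holds term by term in the convolution sums, which makes sense in any algebra of functions
  whose convolution fibres are finite. That is trivial for the monoid algebra; for generalized
  power series it follows from Ramsey's theorem: infinitely many decompositions \<open>s = u\<^sub>i + v\<^sub>i\<close>
  with artinian narrow supports contain some \<open>i < j\<close> with \<open>u\<^sub>i \<le> u\<^sub>j\<close> and \<open>v\<^sub>i \<le> v\<^sub>j\<close>, which
  a strictly ordered monoid forbids. So both sides are equivalent to the same closure condition.\<close>

lemma artinian_subset: "artinian B \<Longrightarrow> A \<subseteq> B \<Longrightarrow> artinian A"
  unfolding artinian_def by blast

lemma narrow_subset: "narrow B \<Longrightarrow> A \<subseteq> B \<Longrightarrow> narrow A"
  unfolding narrow_def by (meson order_trans)

lemma finite_imp_artinian: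
  fixes A :: "'a::order set"
  assumes "finite A"
  shows "artinian A"
  unfolding artinian_def
proof (rule notI, elim exE)
  fix g :: "nat \<Rightarrow> 'a" assume g: "\<forall>n. g n \<in> A \<and> g (Suc n) < g n"
  have dec: "m < n \<Longrightarrow> g n < g m" for m n
    by (induction n) (use g in \<open>auto simp: less_Suc_eq intro: order.strict_trans\<close>)
  have "inj g"
    by (rule injI) (metis dec linorder_neqE_nat less_irrefl)
  then have "infinite (range g)" by (rule range_inj_infinite)
  moreover have "range g \<subseteq> A" using g by auto
  ultimately show False using assms finite_subset by blast
qed

lemma finite_imp_narrow: "finite A \<Longrightarrow> narrow A"
  unfolding narrow_def using finite_subset by blast

lemma artinian_not_descending_on:
  fixes w :: "nat \<Rightarrow> 'a::order"
  assumes "artinian A" "w ` Y \<subseteq> A" "infinite Y"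
  shows "\<not> (\<forall>i\<in>Y. \<forall>j\<in>Y. i < j \<longrightarrow> w j < w i)"
proof
  assume desc: "\<forall>i\<in>Y. \<forall>j\<in>Y. i < j \<longrightarrow> w j < w i"
  have "\<forall>n. w (enumerate Y n) \<in> A \<and> w (enumerate Y (Suc n)) < w (enumerate Y n)"
    using assms(2,3) desc by (auto simp: enumerate_in_set enumerate_step)
  then have "\<exists>g. \<forall>n. g n \<in> A \<and> g (Suc n) < g n" by (rule exI[of _ "\<lambda>n. w (enumerate Y n)"])
  then show False using assms(1) unfolding artinian_def by blast
qed

lemma narrow_not_antichain_on:
  fixes w :: "nat \<Rightarrow> 'a::order"
  assumes "narrow A" "w ` Y \<subseteq> A" "infinite Y"
  shows "\<not> (\<forall>i\<in>Y. \<forall>j\<in>Y. i < j \<longrightarrow> \<not> w i \<le> w j \<and> \<not> w j \<le> w i)"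
proof
  assume "\<forall>i\<in>Y. \<forall>j\<in>Y. i < j \<longrightarrow> \<not> w i \<le> w j \<and> \<not> w j \<le> w i"
  then have incomp: "\<not> w i \<le> w j" if "i \<in> Y" "j \<in> Y" "i \<noteq> j" for i j
    using that by (metis linorder_neqE_nat)
  have "inj_on w Y"
    by (rule inj_onI) (metis incomp order_refl)
  then have "infinite (w ` Y)" using assms(3) finite_imageD by blast
  moreover have "finite (w ` Y)"
  proof -
    have "\<forall>a\<in>w ` Y. \<forall>b\<in>w ` Y. a \<noteq> b \<longrightarrow> \<not> a \<le> b \<and> \<not> b \<le> a"
      using incomp by blast
    with assms(1,2) show ?thesis unfolding narrow_def by blast
  qed
  ultimately show False by contradiction
qed

lemma artinian_narrow_increasing_subseq:
  fixes w :: "nat \<Rightarrow> 'a::order"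
  assumes "artinian A" "narrow A" "w ` X \<subseteq> A" "infinite X"
  obtains Y where "Y \<subseteq> X" "infinite Y" "\<forall>i\<in>Y. \<forall>j\<in>Y. i < j \<longrightarrow> w i \<le> w j"
proof -
  define col :: "nat \<Rightarrow> nat \<Rightarrow> nat" where
    "col i j = (if w i \<le> w j then 0 else if w j < w i then 1 else 2)" for i j
  define f where "f I = col (Min I) (Max I)" for I
  have "\<forall>i\<in>X. \<forall>j\<in>X. i \<noteq> j \<longrightarrow> f {i, j} < 3" by (simp add: f_def col_def)
  then obtain Y c where Y: "Y \<subseteq> X" "infinite Y" "c < 3"
    and mono: "\<forall>i\<in>Y. \<forall>j\<in>Y. i \<noteq> j \<longrightarrow> f {i, j} = c"
    using Ramsey2[OF assms(4), of f 3] by blast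
  have col_c: "col i j = c" if "i \<in> Y" "j \<in> Y" "i < j" for i j
  proof -
    have "f {i, j} = c" using mono[rule_format, OF that(1,2)] that(3) by simp
    then show ?thesis using \<open>i < j\<close> by (simp add: f_def min_def max_def)
  qed
  have col_0: "col i j = 0 \<Longrightarrow> w i \<le> w j"
    and col_1: "col i j = 1 \<Longrightarrow> w j < w i"
    and col_2: "col i j = 2 \<Longrightarrow> \<not> w i \<le> w j \<and> \<not> w j \<le> w i" for i j
    by (auto simp: col_def less_le_not_le split: if_splits)
  have wY: "w ` Y \<subseteq> A" using Y(1) assms(3) by blast
  have "c \<noteq> 1"
    using artinian_not_descending_on[OF assms(1) wY Y(2)] col_c col_1 by blast
  moreover have "c \<noteq> 2"
    using narrow_not_antichain_on[OF assms(2) wY Y(2)] col_c col_2 by blast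
  ultimately have "c = 0" using Y(3) by linarith
  with Y(1,2) col_c col_0 show thesis using that by blast
qed

lemma strictly_ordered_monoid_add_le_eq:
  fixes u v u' v' :: "'a::{comm_monoid_add, order}"
  assumes "strictly_ordered_monoid TYPE('a)" "u \<le> u'" "v \<le> v'" "u + v = u' + v'"
  shows "u = u' \<and> v = v'"
proof -
  have strict: "a < b \<Longrightarrow> a + t < b + t" for a b t :: 'a
    using assms(1) unfolding strictly_ordered_monoid_def by blast
  have mono: "a \<le> b \<Longrightarrow> t + a \<le> t + b" for a b t :: 'a
    using strict[of a b t] by (cases "a = b") (auto simp: le_less add.commute)
  have "\<not> u < u'"
  proof
    assume "u < u'"
    then have "u + v < u' + v" by (rule strict)
    also have "\<dots> \<le> u' + v'" using assms(3) by (rule mono)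
    finally show False using assms(4) by simp
  qed
  moreover have "\<not> v < v'"
  proof
    assume "v < v'"
    then have "u + v < u + v'" using strict[of v v' u] by (simp add: add.commute)
    also have "\<dots> \<le> u' + v'" using mono[OF assms(2), of v'] by (simp add: add.commute)
    finally show False using assms(4) by simp
  qed
  ultimately show ?thesis using assms(2,3) by (simp add: le_less)
qed

lemma finite_add_decompositions:
  fixes A B :: "'a::{comm_monoid_add, order} set"
  assumes som: "strictly_ordered_monoid TYPE('a)"
    and A: "artinian A" "narrow A" and B: "artinian B" "narrow B"
  shows "finite {(u, v). u + v = s \<and> u \<in> A \<and> v \<in> B}"
proof (rule ccontr)
  assume "infinite {(u, v). u + v = s \<and> u \<in> A \<and> v \<in> B}"
  then obtain p :: "nat \<Rightarrow> 'a \<times> 'a"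
    where "inj p" and p: "range p \<subseteq> {(u, v). u + v = s \<and> u \<in> A \<and> v \<in> B}"
    using infinite_countable_subset by blast
  let ?u = "fst \<circ> p" and ?v = "snd \<circ> p"
  have mem: "p n \<in> {(u, v). u + v = s \<and> u \<in> A \<and> v \<in> B}" for n
    by (rule subsetD[OF p rangeI])
  then have sum: "?u n + ?v n = s" for n by (simp add: case_prod_beta)
  have uA: "?u ` X \<subseteq> A" and vB: "?v ` X \<subseteq> B" for X
    using mem by (auto simp: case_prod_beta)
  obtain Y1 where Y1: "Y1 \<subseteq> UNIV" "infinite Y1"
    "\<forall>i\<in>Y1. \<forall>j\<in>Y1. i < j \<longrightarrow> ?u i \<le> ?u j"
    by (rule artinian_narrow_increasing_subseq[OF A uA infinite_UNIV_nat])
  obtain Y2 where Y2: "Y2 \<subseteq> Y1" "infinite Y2" "\<forall>i\<in>Y2. \<forall>j\<in>Y2. i < j \<longrightarrow> ?v i \<le> ?v j"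
    by (rule artinian_narrow_increasing_subseq[OF B vB Y1(2)])
  obtain i where "i \<in> Y2" using infinite_imp_nonempty[OF Y2(2)] by blast
  moreover obtain j where "j \<in> Y2" "i < j" using Y2(2) infinite_nat_iff_unbounded by blast
  ultimately have "?u i \<le> ?u j" "?v i \<le> ?v j" using Y1(3) Y2 by blast+
  then have "?u i = ?u j \<and> ?v i = ?v j"
    by (rule strictly_ordered_monoid_add_le_eq[OF som]) (simp only: sum)
  then have "p i = p j" by (simp add: prod_eq_iff)
  with \<open>inj p\<close> \<open>i < j\<close> show False by (simp add: inj_eq)
qed

definition proj_on :: "'a set \<Rightarrow> ('a \<Rightarrow> 'r::zero) \<Rightarrow> 'a \<Rightarrow> 'r" where
  "proj_on S f s = (if s \<in> S then f s else 0)"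

definition add_closed :: "'a::plus set \<Rightarrow> bool" where
  "add_closed S \<longleftrightarrow> (\<forall>u\<in>S. \<forall>v\<in>S. u + v \<in> S)"

lemma supp_proj_on_subset: "supp (proj_on S f) \<subseteq> supp f"
  by (auto simp: supp_def proj_on_def)

lemma conv_eq_sum_superset:
  assumes "finite F" "{(u, v). u + v = s \<and> f u \<noteq> 0 \<and> g v \<noteq> 0} \<subseteq> F" "F \<subseteq> {(u, v). u + v = s}"
  shows "conv f g s = (\<Sum>(u, v)\<in>F. f u * g v)"
  unfolding conv_def by (rule sum.mono_neutral_left[OF assms(1,2)]) (use assms(3) in auto)

lemma conv_delta:
  "conv (\<lambda>t. if t = u then a else 0) (\<lambda>t. if t = v then b else (0::'r::comm_ring_1)) s
     = (if s = u + v then a * b else 0)"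
proof -
  have "{(p, q). p + q = s \<and> (if p = u then a else 0) \<noteq> 0 \<and> (if q = v then b else 0) \<noteq> 0}
      = (if s = u + v \<and> a \<noteq> 0 \<and> b \<noteq> 0 then {(u, v)} else {})"
    by (auto split: if_splits)
  then show ?thesis unfolding conv_def by auto
qed

lemma rota_baxter_trivial_ring:
  assumes "(1::'r::comm_ring_1) = 0"
  shows "rota_baxter (A :: ('a::comm_monoid_add \<Rightarrow> 'r) set) P"
proof -
  have zero: "c = 0" for c :: 'r
    using mult_1_left[of c] assms by simp
  have eq: "f = g" for f g :: "'a \<Rightarrow> 'r"
    by (rule ext) (simp add: zero[of "f _"] zero[of "g _"])
  have mem: "P x \<in> A" if "x \<in> A" for x
    using that eq[of "P x" x] by simp
  show ?thesis unfolding rota_baxter_def by (intro conjI ballI allI mem eq)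
qed

lemma rota_baxter_proj_on_imp_add_closed:
  fixes S :: "'a::comm_monoid_add set"
  assumes rb: "rota_baxter (A :: ('a \<Rightarrow> 'r::comm_ring_1) set) (proj_on S)"
    and delta: "\<And>u. (\<lambda>t. if t = u then 1 else 0) \<in> A"
    and nz: "(1::'r) \<noteq> 0"
  shows "add_closed S \<and> add_closed (- S)"
proof -
  let ?\<delta> = "\<lambda>u t. if t = u then 1 else (0::'r)"
  let ?ind = "\<lambda>u. if u \<in> S then 1 else (0::'r)"
  have proj_delta: "proj_on S (?\<delta> u) = (\<lambda>t. if t = u then ?ind u else 0)" for u
    by (auto simp: proj_on_def)
  have "\<forall>x\<in>A. \<forall>y\<in>A. conv (proj_on S x) (proj_on S y)
      = (\<lambda>s. proj_on S (conv x (proj_on S y)) s + proj_on S (conv (proj_on S x) y) s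
              - proj_on S (conv x y) s)"
    using rb unfolding rota_baxter_def by blast
  then have "conv (proj_on S (?\<delta> u)) (proj_on S (?\<delta> v)) (u + v)
      = proj_on S (conv (?\<delta> u) (proj_on S (?\<delta> v))) (u + v)
        + proj_on S (conv (proj_on S (?\<delta> u)) (?\<delta> v)) (u + v)
        - proj_on S (conv (?\<delta> u) (?\<delta> v)) (u + v)"
    for u v using delta by simp
  then have key: "?ind u * ?ind v = (if u + v \<in> S then ?ind v + ?ind u - 1 else 0)" for u v
    by (simp add: proj_delta conv_delta proj_on_def)
  show ?thesis
    unfolding add_closed_def
  proof (intro conjI ballI)
    fix u v
    assume "u \<in> S" "v \<in> S"
    then show "u + v \<in> S" using key[of u v] nz by (auto split: if_splits)
  next
    fix u v
    assume "u \<in> - S" "v \<in> - S"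
    then show "u + v \<in> - S" using key[of u v] nz by (auto split: if_splits)
  qed
qed

lemma add_closed_imp_rota_baxter_proj_on:
  fixes S :: "'a::comm_monoid_add set"
  assumes closed: "add_closed S" "add_closed (- S)"
    and proj_in: "\<And>x. x \<in> A \<Longrightarrow> proj_on S x \<in> A"
    and fin: "\<And>x y s. x \<in> A \<Longrightarrow> y \<in> A \<Longrightarrow> finite {(u, v). u + v = s \<and> x u \<noteq> 0 \<and> y v \<noteq> 0}"
  shows "rota_baxter (A :: ('a \<Rightarrow> 'r::comm_ring_1) set) (proj_on S)"
  unfolding rota_baxter_def
proof (intro conjI ballI allI ext)
  fix x y s assume "x \<in> A" "y \<in> A"
  let ?P = "proj_on S"
  define F where "F = {(u, v). u + v = s \<and> x u \<noteq> 0 \<and> y v \<noteq> 0}"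
  have conv_F: "conv f g s = (\<Sum>(u, v)\<in>F. f u * g v)"
    if "supp f \<subseteq> supp x" "supp g \<subseteq> supp y" for f g :: "'a \<Rightarrow> 'r"
    using that fin[OF \<open>x \<in> A\<close> \<open>y \<in> A\<close>]
    by (intro conv_eq_sum_superset) (auto simp: F_def supp_def)
  have termwise: "?P x u * ?P y v = (if s \<in> S then x u * ?P y v + ?P x u * y v - x u * y v else 0)"
    if "u + v = s" for u v
    using closed that unfolding add_closed_def proj_on_def by (auto simp: algebra_simps)
  have "conv (?P x) (?P y) s = (\<Sum>(u, v)\<in>F. ?P x u * ?P y v)"
    by (rule conv_F) (simp_all add: supp_proj_on_subset)
  also have "\<dots> = (\<Sum>(u, v)\<in>F. if s \<in> S then x u * ?P y v + ?P x u * y v - x u * y v else 0)"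
    by (rule sum.cong) (auto simp: F_def termwise)
  also have "\<dots> = (if s \<in> S then (\<Sum>(u, v)\<in>F. x u * ?P y v) + (\<Sum>(u, v)\<in>F. ?P x u * y v)
      - (\<Sum>(u, v)\<in>F. x u * y v) else 0)"
    by (cases "s \<in> S") (simp_all add: case_prod_beta sum_subtractf sum.distrib)
  also have "\<dots> = ?P (conv x (?P y)) s + ?P (conv (?P x) y) s - ?P (conv x y) s"
    using conv_F[OF subset_refl supp_proj_on_subset] conv_F[OF supp_proj_on_subset subset_refl]
      conv_F[OF subset_refl subset_refl]
    by (simp add: proj_on_def[of S _ s])
  finally show "conv (?P x) (?P y) s = ?P (conv x (?P y)) s + ?P (conv (?P x) y) s - ?P (conv x y) s" .
qed (auto simp: proj_in proj_on_def)

lemma rota_baxter_proj_on_iff: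
  fixes S :: "'a::comm_monoid_add set"
  assumes "(1::'r::comm_ring_1) \<noteq> 0"
    and "\<And>u. (\<lambda>t. if t = u then 1 else 0) \<in> A"
    and "\<And>x. x \<in> A \<Longrightarrow> proj_on S x \<in> A"
    and "\<And>x y s. x \<in> A \<Longrightarrow> y \<in> A \<Longrightarrow> finite {(u, v). u + v = s \<and> x u \<noteq> 0 \<and> y v \<noteq> 0}"
  shows "rota_baxter (A :: ('a \<Rightarrow> 'r) set) (proj_on S) \<longleftrightarrow> add_closed S \<and> add_closed (- S)"
proof
  assume "rota_baxter A (proj_on S)"
  then show "add_closed S \<and> add_closed (- S)"
    using assms(2,1) by (rule rota_baxter_proj_on_imp_add_closed)
next
  assume "add_closed S \<and> add_closed (- S)"
  then show "rota_baxter A (proj_on S)"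
    using assms(3,4) by (intro add_closed_imp_rota_baxter_proj_on) auto
qed

lemma delta_in_monoid_algebra: "(\<lambda>t. if t = u then c else 0) \<in> monoid_algebra"
  unfolding monoid_algebra_def supp_def by (rule CollectI, rule finite_subset[of _ "{u}"]) auto

lemma proj_on_in_monoid_algebra: "f \<in> monoid_algebra \<Longrightarrow> proj_on S f \<in> monoid_algebra"
  unfolding monoid_algebra_def by (auto intro: finite_subset[OF supp_proj_on_subset])

lemma monoid_algebra_finite_fibre:
  assumes "x \<in> monoid_algebra" "y \<in> monoid_algebra"
  shows "finite {(u, v). u + v = s \<and> x u \<noteq> 0 \<and> y v \<noteq> 0}"
proof -
  have "finite (supp x \<times> supp y)" using assms unfolding monoid_algebra_def by auto
  then show ?thesis by (rule finite_subset[rotated]) (auto simp: supp_def)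
qed

lemma delta_in_gen_power_series: "(\<lambda>t. if t = u then c else 0) \<in> gen_power_series"
  using delta_in_monoid_algebra[of u c]
  unfolding gen_power_series_def monoid_algebra_def by (auto intro: finite_imp_artinian finite_imp_narrow)

lemma proj_on_in_gen_power_series: "f \<in> gen_power_series \<Longrightarrow> proj_on S f \<in> gen_power_series"
  unfolding gen_power_series_def
  by (auto intro: artinian_subset[OF _ supp_proj_on_subset] narrow_subset[OF _ supp_proj_on_subset])

lemma gen_power_series_finite_fibre:
  assumes "strictly_ordered_monoid TYPE('a::{comm_monoid_add, order})"
    and "x \<in> gen_power_series" "y \<in> gen_power_series"
  shows "finite {(u, v :: 'a). u + v = s \<and> x u \<noteq> 0 \<and> y v \<noteq> 0}"
proof -
  have "finite {(u, v). u + v = s \<and> u \<in> supp x \<and> v \<in> supp y}"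
    using assms unfolding gen_power_series_def by (intro finite_add_decompositions) auto
  then show ?thesis by (rule finite_subset[rotated]) (auto simp: supp_def)
qed

theorem corollary2p3:
  fixes S1 S2 :: "'a::{comm_monoid_add, order} set"
  assumes "strictly_ordered_monoid TYPE('a)"
    and "S1 \<inter> S2 = {}" and "S1 \<union> S2 = UNIV"
  shows "rota_baxter (monoid_algebra :: ('a \<Rightarrow> 'r::comm_ring_1) set) (\<lambda>f s. if s \<in> S1 then f s else 0)
     \<longleftrightarrow> rota_baxter (gen_power_series :: ('a \<Rightarrow> 'r) set) (\<lambda>f s. if s \<in> S1 then f s else 0)"
proof -
  have "rota_baxter (monoid_algebra :: ('a \<Rightarrow> 'r) set) (proj_on S1)
      \<longleftrightarrow> rota_baxter (gen_power_series :: ('a \<Rightarrow> 'r) set) (proj_on S1)"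
  proof (cases "(1::'r) = 0")
    case True
    then show ?thesis by (simp add: rota_baxter_trivial_ring)
  next
    case False
    then show ?thesis
      by (simp add: rota_baxter_proj_on_iff delta_in_monoid_algebra proj_on_in_monoid_algebra
          monoid_algebra_finite_fibre delta_in_gen_power_series proj_on_in_gen_power_series
          gen_power_series_finite_fibre[OF assms(1)])
  qed
  then show ?thesis by (simp add: proj_on_def[abs_def])
qed

end
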